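(* Let $\mathbf{D}$ be a dagger kernel category. Then its dagger Karoubi envelope $\mathrm{Kar}_\dagger(\mathbf{D})$ is again a dagger kernel category. Explicitly, a zero object is $(0,\mathrm{id}_0)$, and for a morphism $f:(X,s)\to(Y,t)$ of $\mathrm{Kar}_\dagger(\mathbf{D})$, if $k:K\to X$ is the dagger kernel of $f$ in $\mathbf{D}$ and $s'=k^\dagger\circ s\circ k$ (the unique map with $k\circ s'=s\circ k$), then $s'$ is a self-adjoint idempotent on $K$ and $s\circ k:(K,s')\to(X,s)$ is a dagger kernel of $f$ in $\mathrm{Kar}_\dagger(\mathbf{D})$. Moreover the embedding $\mathcal{I}:\mathbf{D}\to\mathrm{Kar}_\dagger(\mathbf{D})$, $X\mapsto(X,\mathrm{id}_X)$, $f\mapsto f$, preserves the dagger, the zero object and kernels.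
   Context: A dagger category is a category $\mathbf{D}$ with a contravariant functor $\dagger$ that is the identity on objects and satisfies $f^{\dagger\dagger}=f$. A dagger mono is a morphism $k$ with $k^\dagger\circ k=\mathrm{id}$. A dagger kernel category is a dagger category with a zero object $0$ (yielding zero morphisms $X\to 0\to Y$) in which every morphism has a kernel that is a dagger mono. A self-adjoint idempotent is an endomorphism $s$ with $s^\dagger=s=s\circ s$. The dagger Karoubi envelope $\mathrm{Kar}_\dagger(\mathbf{D})$ has as objects pairs $(X,s)$ with $s$ a self-adjoint idempotent on $X$; a morphism $(X,s)\to(Y,t)$ is a morphism $f:X\to Y$ of $\mathbf{D}$ with $f\circ s=f=t\circ f$; composition is as in $\mathbf{D}$, the identity on $(X,s)$ is $s$, and the dagger is that of $\mathbf{D}$. *)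

theory Defs
  imports Main
begin

text \<open>A (small-free, set-based) category with a dagger. Composition convention:
  cmp C g f is g after f, meaningful when cod f = dom g.\<close>

record ('o, 'm) dcat =
  Obj :: "'o set"
  Arr :: "'m set"
  dm  :: "'m \<Rightarrow> 'o"
  cd  :: "'m \<Rightarrow> 'o"
  cmp :: "'m \<Rightarrow> 'm \<Rightarrow> 'm"
  idt :: "'o \<Rightarrow> 'm"
  dag :: "'m \<Rightarrow> 'm"

definition hom :: "('o, 'm) dcat \<Rightarrow> 'o \<Rightarrow> 'o \<Rightarrow> 'm set" where
  "hom C X Y = {f \<in> Arr C. dm C f = X \<and> cd C f = Y}"

definition is_category :: "('o, 'm) dcat \<Rightarrow> bool" where
  "is_category C \<longleftrightarrow>
     (\<forall>f\<in>Arr C. dm C f \<in> Obj C \<and> cd C f \<in> Obj C) \<and>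
     (\<forall>X\<in>Obj C. idt C X \<in> hom C X X) \<and>
     (\<forall>f\<in>Arr C. \<forall>g\<in>Arr C. cd C f = dm C g \<longrightarrow> cmp C g f \<in> hom C (dm C f) (cd C g)) \<and>
     (\<forall>f\<in>Arr C. cmp C f (idt C (dm C f)) = f \<and> cmp C (idt C (cd C f)) f = f) \<and>
     (\<forall>f\<in>Arr C. \<forall>g\<in>Arr C. \<forall>h\<in>Arr C. cd C f = dm C g \<and> cd C g = dm C h \<longrightarrow>
         cmp C h (cmp C g f) = cmp C (cmp C h g) f)"

definition is_dagger_category :: "('o, 'm) dcat \<Rightarrow> bool" where
  "is_dagger_category C \<longleftrightarrow> is_category C \<and>
     (\<forall>f\<in>Arr C. dag C f \<in> hom C (cd C f) (dm C f) \<and> dag C (dag C f) = f) \<and>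
     (\<forall>X\<in>Obj C. dag C (idt C X) = idt C X) \<and>
     (\<forall>f\<in>Arr C. \<forall>g\<in>Arr C. cd C f = dm C g \<longrightarrow>
         dag C (cmp C g f) = cmp C (dag C f) (dag C g))"

definition is_zero_obj :: "('o, 'm) dcat \<Rightarrow> 'o \<Rightarrow> bool" where
  "is_zero_obj C z \<longleftrightarrow> z \<in> Obj C \<and>
     (\<forall>X\<in>Obj C. (\<exists>!f. f \<in> hom C X z) \<and> (\<exists>!f. f \<in> hom C z X))"

definition is_zero_mor :: "('o, 'm) dcat \<Rightarrow> 'm \<Rightarrow> bool" where
  "is_zero_mor C g \<longleftrightarrow> g \<in> Arr C \<and> (\<exists>z a b. is_zero_obj C z \<and>
      a \<in> hom C (dm C g) z \<and> b \<in> hom C z (cd C g) \<and> g = cmp C b a)"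

definition is_kernel :: "('o, 'm) dcat \<Rightarrow> 'm \<Rightarrow> 'm \<Rightarrow> bool" where
  "is_kernel C f k \<longleftrightarrow> f \<in> Arr C \<and> k \<in> Arr C \<and> cd C k = dm C f \<and>
     is_zero_mor C (cmp C f k) \<and>
     (\<forall>g\<in>Arr C. cd C g = dm C f \<and> is_zero_mor C (cmp C f g) \<longrightarrow>
        (\<exists>!h. h \<in> hom C (dm C g) (dm C k) \<and> cmp C k h = g))"

definition dagger_mono :: "('o, 'm) dcat \<Rightarrow> 'm \<Rightarrow> bool" where
  "dagger_mono C k \<longleftrightarrow> k \<in> Arr C \<and> cmp C (dag C k) k = idt C (dm C k)"

definition is_dagger_kernel_category :: "('o, 'm) dcat \<Rightarrow> bool" where
  "is_dagger_kernel_category C \<longleftrightarrow> is_dagger_category C \<and>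
     (\<exists>z. is_zero_obj C z) \<and>
     (\<forall>f\<in>Arr C. \<exists>k. is_kernel C f k \<and> dagger_mono C k)"

definition sa_idem :: "('o, 'm) dcat \<Rightarrow> 'o \<Rightarrow> 'm \<Rightarrow> bool" where
  "sa_idem C X s \<longleftrightarrow> s \<in> hom C X X \<and> dag C s = s \<and> cmp C s s = s"

text \<open>Dagger Karoubi envelope. Objects are pairs (X,s); a morphism is recorded
  together with its source and target objects as a triple (A, B, f).\<close>
definition Kar :: "('o, 'm) dcat \<Rightarrow> ('o \<times> 'm, ('o \<times> 'm) \<times> ('o \<times> 'm) \<times> 'm) dcat" where
  "Kar C = \<lparr> Obj = {(X, s). X \<in> Obj C \<and> sa_idem C X s},
     Arr = {((X, s), (Y, t), f). X \<in> Obj C \<and> sa_idem C X s \<and> Y \<in> Obj C \<and> sa_idem C Y t \<and>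
              f \<in> hom C X Y \<and> cmp C f s = f \<and> cmp C t f = f},
     dm = (\<lambda>(A, B, f). A),
     cd = (\<lambda>(A, B, f). B),
     cmp = (\<lambda>(B', C', g) (A, B, f). (A, C', cmp C g f)),
     idt = (\<lambda>(X, s). ((X, s), (X, s), s)),
     dag = (\<lambda>(A, B, f). (B, A, dag C f)) \<rparr>"

definition Iobj :: "('o, 'm) dcat \<Rightarrow> 'o \<Rightarrow> 'o \<times> 'm" where
  "Iobj C X = (X, idt C X)"

definition Iarr :: "('o, 'm) dcat \<Rightarrow> 'm \<Rightarrow> ('o \<times> 'm) \<times> ('o \<times> 'm) \<times> 'm" where
  "Iarr C f = (Iobj C (dm C f), Iobj C (cd C f), f)"

end

theory Submission
  imports Defs
begin

(* For a zero object z of D, (z, id z) is terminal and hence zero in Kar D, and a morphism of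
   Kar D is a zero morphism exactly when its underlying morphism of D is one.
   This yields a kernel criterion for Kar D: a morphism k : (K,e) -> (X,s) is a kernel of
   f : (X,s) -> (Y,t) once f k = 0 and every g with s g = g and f g = 0 factors uniquely
   through k by some h with e h = h.
   For a dagger kernel k of f in D, the restricted idempotent s' = k^dagger s k is the unique
   solution of k s' = s k, is a self-adjoint idempotent, and s k : (K,s') -> (X,s) meets the
   criterion and is a dagger mono.  The embedding X -> (X, id X) is the special case s = id;
   the main theorem collects these facts. *)

lemma in_hom [simp]: "f \<in> hom C X Y \<longleftrightarrow> f \<in> Arr C \<and> dm C f = X \<and> cd C f = Y"
  by (simp add: hom_def)

lemma Kar_simps [simp]:
  "Obj (Kar C) = {(X, s). X \<in> Obj C \<and> sa_idem C X s}"
  "dm (Kar C) (A, B, f) = A"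
  "cd (Kar C) (A, B, f) = B"
  "cmp (Kar C) (B', E, g) (A, B, f) = (A, E, cmp C g f)"
  "idt (Kar C) (X, s) = ((X, s), (X, s), s)"
  "dag (Kar C) (A, B, f) = (B, A, dag C f)"
  by (simp_all add: Kar_def)

locale dagger_cat =
  fixes D :: "('o, 'm) dcat"
  assumes dagger_category: "is_dagger_category D"
begin

lemma category: "is_category D"
  using dagger_category unfolding is_dagger_category_def by blast

lemma dm_obj [simp]: "f \<in> Arr D \<Longrightarrow> dm D f \<in> Obj D"
  and cd_obj [simp]: "f \<in> Arr D \<Longrightarrow> cd D f \<in> Obj D"
  using category unfolding is_category_def by auto

lemma id_arr [simp]:
  "X \<in> Obj D \<Longrightarrow> idt D X \<in> Arr D"
  "X \<in> Obj D \<Longrightarrow> dm D (idt D X) = X"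
  "X \<in> Obj D \<Longrightarrow> cd D (idt D X) = X"
  using category unfolding is_category_def by auto

lemma comp_arr [simp]:
  assumes "f \<in> Arr D" "g \<in> Arr D" "cd D f = dm D g"
  shows "cmp D g f \<in> Arr D" "dm D (cmp D g f) = dm D f" "cd D (cmp D g f) = cd D g"
  using assms category unfolding is_category_def by auto

lemma comp_id_right [simp]: "\<lbrakk>f \<in> Arr D; dm D f = X\<rbrakk> \<Longrightarrow> cmp D f (idt D X) = f"
  and comp_id_left [simp]: "\<lbrakk>f \<in> Arr D; cd D f = Y\<rbrakk> \<Longrightarrow> cmp D (idt D Y) f = f"
  using category unfolding is_category_def by auto

lemma assoc:
  assumes "f \<in> Arr D" "g \<in> Arr D" "h \<in> Arr D" "cd D f = dm D g" "cd D g = dm D h"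
  shows "cmp D h (cmp D g f) = cmp D (cmp D h g) f"
  using assms category unfolding is_category_def by blast

lemma dag_arr [simp]:
  assumes "f \<in> Arr D"
  shows "dag D f \<in> Arr D" "dm D (dag D f) = cd D f" "cd D (dag D f) = dm D f"
    "dag D (dag D f) = f"
  using assms dagger_category unfolding is_dagger_category_def by auto

lemma dag_id [simp]: "X \<in> Obj D \<Longrightarrow> dag D (idt D X) = idt D X"
  using dagger_category unfolding is_dagger_category_def by auto

lemma dag_comp:
  "\<lbrakk>f \<in> Arr D; g \<in> Arr D; cd D f = dm D g\<rbrakk> \<Longrightarrow> dag D (cmp D g f) = cmp D (dag D f) (dag D g)"
  using dagger_category unfolding is_dagger_category_def by auto

text \<open>In a dagger category the dagger maps hom X z bijectively onto hom z X, so an object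
  with a unique morphism from every object also has a unique morphism to every object.\<close>
lemma zero_obj_if_terminal:
  assumes z: "z \<in> Obj D" and terminal: "\<And>X. X \<in> Obj D \<Longrightarrow> \<exists>!f. f \<in> hom D X z"
  shows "is_zero_obj D z"
  unfolding is_zero_obj_def
proof (intro conjI ballI z)
  fix X assume X: "X \<in> Obj D"
  show "\<exists>!f. f \<in> hom D X z" using terminal[OF X] .
  then obtain a where a: "a \<in> hom D X z" and a_unique: "\<And>b. b \<in> hom D X z \<Longrightarrow> b = a"
    by blast
  show "\<exists>!f. f \<in> hom D z X"
  proof
    show "dag D a \<in> hom D z X" using a by simp
    fix g assume "g \<in> hom D z X"
    then have "dag D g = a" using a_unique by simp
    then show "g = dag D a" using \<open>g \<in> hom D z X\<close> by auto
  qed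
qed

text \<open>All endomorphisms of a zero object coincide, so its identity factors through any object.\<close>
lemma zero_obj_id_factors:
  assumes "is_zero_obj D z" "p \<in> hom D z W" "q \<in> hom D W z"
  shows "cmp D q p = idt D z"
proof -
  have "z \<in> Obj D" "\<exists>!f. f \<in> hom D z z" using assms(1) unfolding is_zero_obj_def by auto
  moreover have "cmp D q p \<in> hom D z z" using assms(2,3) by simp
  ultimately show ?thesis by auto
qed

lemma sa_idem_iff:
  "sa_idem D X s \<longleftrightarrow> s \<in> Arr D \<and> dm D s = X \<and> cd D s = X \<and> dag D s = s \<and> cmp D s s = s"
  unfolding sa_idem_def by auto

lemma id_sa_idem: "X \<in> Obj D \<Longrightarrow> sa_idem D X (idt D X)"
  unfolding sa_idem_iff by simp

lemma Kar_arr_iff [simp]: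
  "((X, s), (Y, t), f) \<in> Arr (Kar D) \<longleftrightarrow> sa_idem D X s \<and> sa_idem D Y t \<and>
     f \<in> Arr D \<and> dm D f = X \<and> cd D f = Y \<and> cmp D f s = f \<and> cmp D t f = f"
  by (auto simp: Kar_def sa_idem_iff)

lemma Kar_arr_cases:
  assumes "x \<in> Arr (Kar D)"
  obtains X s Y t f where "x = ((X, s), (Y, t), f)" "((X, s), (Y, t), f) \<in> Arr (Kar D)"
  using assms by (cases x) auto

lemma Kar_hom_iff:
  "x \<in> hom (Kar D) (X, s) (Y, t) \<longleftrightarrow> (\<exists>f. x = ((X, s), (Y, t), f) \<and> ((X, s), (Y, t), f) \<in> Arr (Kar D))"
  by (cases x) auto

text \<open>Composites and daggers of Kar morphisms are again Kar morphisms, because the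
  idempotents are self-adjoint and absorbed on the correct sides.\<close>
lemma Kar_comp_arr:
  assumes "((X, s), (Y, t), f) \<in> Arr (Kar D)" "((Y, t), (Z, u), g) \<in> Arr (Kar D)"
  shows "((X, s), (Z, u), cmp D g f) \<in> Arr (Kar D)"
proof -
  have "cmp D (cmp D g f) s = cmp D g (cmp D f s)" "cmp D u (cmp D g f) = cmp D (cmp D u g) f"
    using assms assoc[of s f g] assoc[of f g u] by (simp_all add: sa_idem_iff)
  then show ?thesis using assms by simp
qed

lemma Kar_dag_arr:
  assumes "((X, s), (Y, t), f) \<in> Arr (Kar D)"
  shows "((Y, t), (X, s), dag D f) \<in> Arr (Kar D)"
proof -
  have "dag D (cmp D t f) = cmp D (dag D f) t" "dag D (cmp D f s) = cmp D s (dag D f)"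
    using assms dag_comp[of f t] dag_comp[of s f] by (simp_all add: sa_idem_iff)
  then show ?thesis using assms by simp
qed

lemma Kar_category: "is_category (Kar D)"
  unfolding is_category_def
proof (intro conjI ballI impI)
  fix x assume "x \<in> Arr (Kar D)"
  then obtain X s Y t f where x: "x = ((X, s), (Y, t), f)" "((X, s), (Y, t), f) \<in> Arr (Kar D)"
    by (rule Kar_arr_cases)
  then show "dm (Kar D) x \<in> Obj (Kar D)" "cd (Kar D) x \<in> Obj (Kar D)"
    "cmp (Kar D) x (idt (Kar D) (dm (Kar D) x)) = x"
    "cmp (Kar D) (idt (Kar D) (cd (Kar D) x)) x = x"
    by (auto simp: sa_idem_iff)
next
  fix A assume "A \<in> Obj (Kar D)"
  then show "idt (Kar D) A \<in> hom (Kar D) A A" by (auto simp: sa_idem_iff)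
next
  fix x y assume xy: "x \<in> Arr (Kar D)" "y \<in> Arr (Kar D)" "cd (Kar D) x = dm (Kar D) y"
  obtain X s Y t f where x: "x = ((X, s), (Y, t), f)" "((X, s), (Y, t), f) \<in> Arr (Kar D)"
    using xy(1) by (rule Kar_arr_cases)
  obtain Y' t' Z u g where y: "y = ((Y', t'), (Z, u), g)" "((Y', t'), (Z, u), g) \<in> Arr (Kar D)"
    using xy(2) by (rule Kar_arr_cases)
  show "cmp (Kar D) y x \<in> hom (Kar D) (dm (Kar D) x) (cd (Kar D) y)"
    using Kar_comp_arr[OF x(2)] x y xy(3) by auto
next
  fix x y w assume xyw: "x \<in> Arr (Kar D)" "y \<in> Arr (Kar D)" "w \<in> Arr (Kar D)"
    "cd (Kar D) x = dm (Kar D) y \<and> cd (Kar D) y = dm (Kar D) w"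
  obtain X s Y t f where x: "x = ((X, s), (Y, t), f)" "((X, s), (Y, t), f) \<in> Arr (Kar D)"
    using xyw(1) by (rule Kar_arr_cases)
  obtain Y' t' Z u g where y: "y = ((Y', t'), (Z, u), g)" "((Y', t'), (Z, u), g) \<in> Arr (Kar D)"
    using xyw(2) by (rule Kar_arr_cases)
  obtain Z' u' W v h where w: "w = ((Z', u'), (W, v), h)" "((Z', u'), (W, v), h) \<in> Arr (Kar D)"
    using xyw(3) by (rule Kar_arr_cases)
  show "cmp (Kar D) w (cmp (Kar D) y x) = cmp (Kar D) (cmp (Kar D) w y) x"
    using x y w xyw(4) assoc[of f g h] by simp
qed

lemma Kar_dagger_category: "is_dagger_category (Kar D)"
  unfolding is_dagger_category_def
proof (intro conjI ballI impI Kar_category)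
  fix x assume "x \<in> Arr (Kar D)"
  then obtain X s Y t f where x: "x = ((X, s), (Y, t), f)" "((X, s), (Y, t), f) \<in> Arr (Kar D)"
    by (rule Kar_arr_cases)
  then show "dag (Kar D) x \<in> hom (Kar D) (cd (Kar D) x) (dm (Kar D) x)"
    "dag (Kar D) (dag (Kar D) x) = x"
    using Kar_dag_arr[OF x(2)] by auto
next
  fix A assume "A \<in> Obj (Kar D)"
  then show "dag (Kar D) (idt (Kar D) A) = idt (Kar D) A" by (auto simp: sa_idem_iff)
next
  fix x y assume xy: "x \<in> Arr (Kar D)" "y \<in> Arr (Kar D)" "cd (Kar D) x = dm (Kar D) y"
  obtain X s Y t f where x: "x = ((X, s), (Y, t), f)" "((X, s), (Y, t), f) \<in> Arr (Kar D)"
    using xy(1) by (rule Kar_arr_cases)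
  obtain Y' t' Z u g where y: "y = ((Y', t'), (Z, u), g)" "((Y', t'), (Z, u), g) \<in> Arr (Kar D)"
    using xy(2) by (rule Kar_arr_cases)
  show "dag (Kar D) (cmp (Kar D) y x) = cmp (Kar D) (dag (Kar D) x) (dag (Kar D) y)"
    using x y xy(3) dag_comp[of f g] by simp
qed

interpretation K: dagger_cat "Kar D"
  by (rule dagger_cat.intro, rule Kar_dagger_category)

text \<open>A zero object z of D gives the zero object (z, id z) of Kar D: the unique morphism
  a : X -> z automatically absorbs any idempotent s on X, and (z, id z) is then terminal.\<close>
lemma Kar_zero_obj:
  assumes z: "is_zero_obj D z"
  shows "is_zero_obj (Kar D) (z, idt D z)"
proof (rule K.zero_obj_if_terminal)
  have zO: "z \<in> Obj D" using z unfolding is_zero_obj_def by blast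
  then show "(z, idt D z) \<in> Obj (Kar D)" using id_sa_idem by simp
  fix A assume "A \<in> Obj (Kar D)"
  then obtain X s where A: "A = (X, s)" and X: "X \<in> Obj D" and s: "sa_idem D X s" by auto
  obtain a where a: "a \<in> hom D X z" and a_unique: "\<And>b. b \<in> hom D X z \<Longrightarrow> b = a"
    using z X unfolding is_zero_obj_def by metis
  have "cmp D a s = a" using a s by (intro a_unique) (simp add: sa_idem_iff)
  then have "((X, s), (z, idt D z), a) \<in> Arr (Kar D)" using a s zO id_sa_idem by simp
  moreover have "b = a" if "((X, s), (z, idt D z), b) \<in> Arr (Kar D)" for b
    using that by (intro a_unique) simp
  ultimately show "\<exists>!x. x \<in> hom (Kar D) A (z, idt D z)"
    unfolding A Kar_hom_iff by blast
qed

text \<open>Zero morphisms of D lift to Kar D: a factorisation f = b a through a zero object z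
  of D yields the factorisation f = (t b)(a s) through the zero object (z, id z) of Kar D.\<close>
lemma Kar_zero_mor_if_zero:
  assumes F: "((X, s), (Y, t), f) \<in> Arr (Kar D)" and zero: "is_zero_mor D f"
  shows "is_zero_mor (Kar D) ((X, s), (Y, t), f)"
proof -
  obtain z' a b where z': "is_zero_obj D z'" and a: "a \<in> hom D X z'" and b: "b \<in> hom D z' Y"
    and fab: "f = cmp D b a"
    using zero F unfolding is_zero_mor_def by auto
  have z'O: "z' \<in> Obj D" using z' unfolding is_zero_obj_def by blast
  have s: "s \<in> Arr D" "dm D s = X" "cd D s = X" "cmp D s s = s"
    and t: "t \<in> Arr D" "dm D t = Y" "cd D t = Y" "cmp D t t = t"
    using F by (simp_all add: sa_idem_iff)
  have aK: "((X, s), (z', idt D z'), cmp D a s) \<in> Arr (Kar D)"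
    using a s F z'O id_sa_idem by (simp add: assoc[symmetric])
  have bK: "((z', idt D z'), (Y, t), cmp D t b) \<in> Arr (Kar D)"
    using b t F z'O id_sa_idem by (simp add: assoc)
  have "cmp D (cmp D t b) (cmp D a s) = cmp D t (cmp D f s)"
    unfolding fab using a b s t by (simp add: assoc)
  then have "((X, s), (Y, t), f) = cmp (Kar D) ((z', idt D z'), (Y, t), cmp D t b)
                                          ((X, s), (z', idt D z'), cmp D a s)"
    using F by simp
  moreover have "((X, s), (z', idt D z'), cmp D a s) \<in> hom (Kar D) (X, s) (z', idt D z')"
    "((z', idt D z'), (Y, t), cmp D t b) \<in> hom (Kar D) (z', idt D z') (Y, t)"
    using aK bK unfolding hom_def by simp_all
  ultimately show "is_zero_mor (Kar D) ((X, s), (Y, t), f)"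
    unfolding is_zero_mor_def Kar_simps(2,3) using F Kar_zero_obj[OF z'] by blast
qed

text \<open>Conversely, if f = b a factors through some zero object (Z,u) of Kar D, then u = q p
  for morphisms p, q between (Z,u) and (z, id z), so f = (b q)(p a) factors through z in D.\<close>
lemma zero_mor_if_Kar_zero:
  assumes z: "is_zero_obj D z" and F: "((X, s), (Y, t), f) \<in> Arr (Kar D)"
    and zero: "is_zero_mor (Kar D) ((X, s), (Y, t), f)"
  shows "is_zero_mor D f"
proof -
  obtain Z u a b where Zu: "is_zero_obj (Kar D) (Z, u)"
    and a: "a \<in> hom (Kar D) (X, s) (Z, u)" and b: "b \<in> hom (Kar D) (Z, u) (Y, t)"
    and fab: "((X, s), (Y, t), f) = cmp (Kar D) b a"
    using zero unfolding is_zero_mor_def Kar_simps(2,3) by (metis surj_pair)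
  obtain a0 where a0: "a = ((X, s), (Z, u), a0)" "((X, s), (Z, u), a0) \<in> Arr (Kar D)"
    using a Kar_hom_iff by blast
  obtain b0 where b0: "b = ((Z, u), (Y, t), b0)" "((Z, u), (Y, t), b0) \<in> Arr (Kar D)"
    using b Kar_hom_iff by blast
  have zK: "is_zero_obj (Kar D) (z, idt D z)" using Kar_zero_obj[OF z] .
  have ZuO: "(Z, u) \<in> Obj (Kar D)" using Zu unfolding is_zero_obj_def by blast
  obtain p where p: "p \<in> hom (Kar D) (Z, u) (z, idt D z)"
    using zK ZuO unfolding is_zero_obj_def by blast
  obtain q where q: "q \<in> hom (Kar D) (z, idt D z) (Z, u)"
    using zK ZuO unfolding is_zero_obj_def by blast
  obtain p0 where p0: "p = ((Z, u), (z, idt D z), p0)" "((Z, u), (z, idt D z), p0) \<in> Arr (Kar D)"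
    using p Kar_hom_iff by blast
  obtain q0 where q0: "q = ((z, idt D z), (Z, u), q0)" "((z, idt D z), (Z, u), q0) \<in> Arr (Kar D)"
    using q Kar_hom_iff by blast
  have "cmp (Kar D) q p = idt (Kar D) (Z, u)" using K.zero_obj_id_factors[OF Zu p q] .
  then have u: "u = cmp D q0 p0" using p0 q0 by simp
  have "f = cmp D b0 a0" using fab a0 b0 by simp
  also have "\<dots> = cmp D b0 (cmp D u a0)" using a0 by simp
  also have "\<dots> = cmp D (cmp D b0 q0) (cmp D p0 a0)"
    unfolding u using a0 b0 p0 q0 by (simp add: assoc)
  finally have "f = cmp D (cmp D b0 q0) (cmp D p0 a0)" .
  moreover have "cmp D p0 a0 \<in> hom D X z" "cmp D b0 q0 \<in> hom D z Y" using a0 b0 p0 q0 by simp_all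
  ultimately show "is_zero_mor D f"
    unfolding is_zero_mor_def using F z by auto
qed

lemma Kar_zero_mor_iff:
  assumes "is_zero_obj D z" and "((X, s), (Y, t), f) \<in> Arr (Kar D)"
  shows "is_zero_mor (Kar D) ((X, s), (Y, t), f) \<longleftrightarrow> is_zero_mor D f"
  using assms Kar_zero_mor_if_zero zero_mor_if_Kar_zero by blast

text \<open>Let k : (K,e) -> (X,s) be such
  that every g into X with s g = g and f g = 0 factors uniquely as g = k h with e h = h.
  Then a Kar morphism g : (A,a) -> (X,s) with f g = 0 factors uniquely through k in Kar D:
  its factor h also absorbs a, because h a is another such factor of g a = g.\<close>
lemma Kar_kernel_factor:
  assumes k: "((K, e), (X, s), k) \<in> Arr (Kar D)"
    and factor: "\<And>g. \<lbrakk>g \<in> Arr D; cd D g = X; cmp D s g = g; is_zero_mor D (cmp D f g)\<rbrakk> \<Longrightarrow>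
        \<exists>!h. h \<in> hom D (dm D g) K \<and> cmp D e h = h \<and> cmp D k h = g"
    and G: "((A, a), (X, s), g) \<in> Arr (Kar D)" and zero: "is_zero_mor D (cmp D f g)"
  shows "\<exists>!H. H \<in> hom (Kar D) (A, a) (K, e) \<and> cmp (Kar D) ((K, e), (X, s), k) H = ((A, a), (X, s), g)"
proof -
  have g: "g \<in> Arr D" "dm D g = A" "cd D g = X" "cmp D s g = g" "cmp D g a = g"
    and a: "a \<in> Arr D" "dm D a = A" "cd D a = A"
    and e: "e \<in> Arr D" "dm D e = K" "cd D e = K"
    using G k by (simp_all add: sa_idem_iff)
  obtain h where h: "h \<in> hom D A K" "cmp D e h = h" "cmp D k h = g"
    and h_unique: "\<And>h'. \<lbrakk>h' \<in> hom D A K; cmp D e h' = h'; cmp D k h' = g\<rbrakk> \<Longrightarrow> h' = h"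
    using factor[OF g(1,3,4) zero] g(2) by metis
  have "cmp D e (cmp D h a) = cmp D h a" "cmp D k (cmp D h a) = g"
    using h a e k g assoc[of a h e] assoc[of a h k] by simp_all
  then have "cmp D h a = h" using h a by (intro h_unique) simp_all
  then have HK: "((A, a), (K, e), h) \<in> Arr (Kar D)" using G k h by simp
  show ?thesis
  proof
    show "((A, a), (K, e), h) \<in> hom (Kar D) (A, a) (K, e) \<and>
          cmp (Kar D) ((K, e), (X, s), k) ((A, a), (K, e), h) = ((A, a), (X, s), g)"
      using HK h by simp
  next
    fix H assume H: "H \<in> hom (Kar D) (A, a) (K, e) \<and>
                     cmp (Kar D) ((K, e), (X, s), k) H = ((A, a), (X, s), g)"
    then obtain h' where h': "H = ((A, a), (K, e), h')" "((A, a), (K, e), h') \<in> Arr (Kar D)"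
      unfolding Kar_hom_iff by blast
    then have "h' = h" using H by (intro h_unique) simp_all
    then show "H = ((A, a), (K, e), h)" using h' by simp
  qed
qed

text \<open>Zero morphisms are transported between D and Kar D.\<close>
lemma Kar_kernelI:
  assumes z: "is_zero_obj D z"
    and F: "((X, s), (Y, t), f) \<in> Arr (Kar D)"
    and k: "((K, e), (X, s), k) \<in> Arr (Kar D)"
    and fk: "is_zero_mor D (cmp D f k)"
    and factor: "\<And>g. \<lbrakk>g \<in> Arr D; cd D g = X; cmp D s g = g; is_zero_mor D (cmp D f g)\<rbrakk> \<Longrightarrow>
        \<exists>!h. h \<in> hom D (dm D g) K \<and> cmp D e h = h \<and> cmp D k h = g"
  shows "is_kernel (Kar D) ((X, s), (Y, t), f) ((K, e), (X, s), k)"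
  unfolding is_kernel_def
proof (intro conjI ballI impI F k)
  show "cd (Kar D) ((K, e), (X, s), k) = dm (Kar D) ((X, s), (Y, t), f)" by simp
  show "is_zero_mor (Kar D) (cmp (Kar D) ((X, s), (Y, t), f) ((K, e), (X, s), k))"
    using Kar_zero_mor_iff[OF z Kar_comp_arr[OF k F]] fk by simp
next
  fix G assume "G \<in> Arr (Kar D)" and "cd (Kar D) G = dm (Kar D) ((X, s), (Y, t), f) \<and>
                 is_zero_mor (Kar D) (cmp (Kar D) ((X, s), (Y, t), f) G)"
  then have G: "G \<in> hom (Kar D) (dm (Kar D) G) (X, s)"
    and Gzero: "is_zero_mor (Kar D) (cmp (Kar D) ((X, s), (Y, t), f) G)" by simp_all
  obtain A a where A: "dm (Kar D) G = (A, a)" by fastforce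
  then obtain g where Ge: "G = ((A, a), (X, s), g)" and GK: "((A, a), (X, s), g) \<in> Arr (Kar D)"
    using G unfolding A Kar_hom_iff by blast
  have "is_zero_mor D (cmp D f g)"
    using Gzero Kar_zero_mor_iff[OF z Kar_comp_arr[OF GK F]] Ge by simp
  then show "\<exists>!H. H \<in> hom (Kar D) (dm (Kar D) G) (dm (Kar D) ((K, e), (X, s), k)) \<and>
             cmp (Kar D) ((K, e), (X, s), k) H = G"
    using Kar_kernel_factor[OF k factor GK] unfolding Ge Kar_simps(2) by blast
qed

lemma dagger_mono_cancel:
  assumes "dagger_mono D k" "h \<in> Arr D" "cd D h = dm D k"
  shows "cmp D (dag D k) (cmp D k h) = h"
  using assms assoc[of h k "dag D k"] unfolding dagger_mono_def by simp

definition restrict_idem :: "'m \<Rightarrow> 'm \<Rightarrow> 'm" where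
  "restrict_idem k s = cmp D (dag D k) (cmp D s k)"

lemma restricted_idem:
  assumes k: "dagger_mono D k" and s: "sa_idem D (cd D k) s"
    and u: "u \<in> hom D (dm D k) (dm D k)" "cmp D k u = cmp D s k"
  defines "s' \<equiv> restrict_idem k s"
  shows "u = s'" and "cmp D k s' = cmp D s k" and "sa_idem D (dm D k) s'"
proof -
  have kA: "k \<in> Arr D" using k unfolding dagger_mono_def by blast
  have sA: "s \<in> Arr D" "dm D s = cd D k" "cd D s = cd D k" "dag D s = s" "cmp D s s = s"
    using s unfolding sa_idem_iff by auto
  show us': "u = s'" unfolding s'_def restrict_idem_def using dagger_mono_cancel[OF k, of u] u by simp
  then show ks': "cmp D k s' = cmp D s k" using u by simp
  have "dag D s' = cmp D (dag D (cmp D s k)) k"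
    unfolding s'_def restrict_idem_def using kA sA by (simp add: dag_comp)
  also have "\<dots> = s'" unfolding s'_def restrict_idem_def using kA sA by (simp add: dag_comp assoc)
  finally have dag_s': "dag D s' = s'" .
  have "cmp D s' s' = cmp D (dag D k) (cmp D s (cmp D k s'))"
    unfolding s'_def restrict_idem_def using kA sA by (simp add: assoc)
  also have "\<dots> = cmp D (dag D k) (cmp D (cmp D s s) k)"
    unfolding ks' using kA sA by (simp add: assoc)
  also have "\<dots> = s'" unfolding s'_def restrict_idem_def using sA by simp
  finally show "sa_idem D (dm D k) s'"
    using dag_s' us' u unfolding sa_idem_iff by simp
qed

context
  fixes X s Y t f k
  assumes F: "((X, s), (Y, t), f) \<in> Arr (Kar D)"
    and ker: "is_kernel D f k" and dmono: "dagger_mono D k"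
begin

private lemma kernel_facts:
  "k \<in> Arr D" "cd D k = X" "is_zero_mor D (cmp D f k)"
  "\<And>g. \<lbrakk>g \<in> Arr D; cd D g = X; is_zero_mor D (cmp D f g)\<rbrakk> \<Longrightarrow>
     \<exists>!h. h \<in> hom D (dm D g) (dm D k) \<and> cmp D k h = g"
  using ker F unfolding is_kernel_def by auto

private lemma idem_facts:
  "s \<in> Arr D" "dm D s = X" "cd D s = X" "dag D s = s" "cmp D s s = s"
  "f \<in> Arr D" "dm D f = X" "cmp D f s = f"
  using F unfolding Kar_arr_iff sa_idem_iff by auto

text \<open>Since f s k = f k = 0, the morphism s k factors through the kernel k; hence the
  restriction of s along k is the unique such factor and a self-adjoint idempotent.\<close>
lemma kernel_restrict_idem:
  "sa_idem D (dm D k) (restrict_idem k s)"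
  "cmp D k (restrict_idem k s) = cmp D s k"
  "\<And>u. \<lbrakk>u \<in> hom D (dm D k) (dm D k); cmp D k u = cmp D s k\<rbrakk> \<Longrightarrow> u = restrict_idem k s"
proof -
  have "cmp D f (cmp D s k) = cmp D f k"
    using kernel_facts idem_facts assoc[of k s f] by simp
  then obtain u where u: "u \<in> hom D (dm D k) (dm D k)" "cmp D k u = cmp D s k"
    using kernel_facts(4)[of "cmp D s k"] kernel_facts idem_facts by auto
  have s: "sa_idem D (cd D k) s" using F kernel_facts by simp
  show "sa_idem D (dm D k) (restrict_idem k s)" "cmp D k (restrict_idem k s) = cmp D s k"
    using restricted_idem[OF dmono s u] by simp_all
  show "\<And>u. \<lbrakk>u \<in> hom D (dm D k) (dm D k); cmp D k u = cmp D s k\<rbrakk> \<Longrightarrow> u = restrict_idem k s"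
    using restricted_idem(1)[OF dmono s] by simp
qed

text \<open>s k absorbs s on the left and s' on the right, since s k s' = s s k = s k.\<close>
lemma kernel_Kar_arr: "((dm D k, restrict_idem k s), (X, s), cmp D s k) \<in> Arr (Kar D)"
proof -
  have "cmp D (cmp D s k) (restrict_idem k s) = cmp D s (cmp D s k)"
    using kernel_facts idem_facts kernel_restrict_idem assoc[of "restrict_idem k s" k s]
    by (simp add: sa_idem_iff)
  also have "\<dots> = cmp D s k" using kernel_facts idem_facts assoc[of k s s] by simp
  finally show ?thesis
    using F kernel_facts idem_facts kernel_restrict_idem(1) assoc[of k s s] by simp
qed

text \<open>s k : (K, s') -> (X, s) satisfies the kernel criterion: a g with s g = g and f g = 0 is
  g = k m for a unique m, and m is also the unique factor through s k absorbing s'.\<close>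
lemma kernel_Kar_kernel:
  assumes z: "is_zero_obj D z"
  shows "is_kernel (Kar D) ((X, s), (Y, t), f) ((dm D k, restrict_idem k s), (X, s), cmp D s k)"
proof (rule Kar_kernelI[OF z F kernel_Kar_arr])
  show "is_zero_mor D (cmp D f (cmp D s k))"
    using kernel_facts idem_facts assoc[of k s f] by simp
next
  fix g assume g: "g \<in> Arr D" "cd D g = X" "cmp D s g = g" "is_zero_mor D (cmp D f g)"
  let ?s' = "restrict_idem k s"
  obtain m where m: "m \<in> hom D (dm D g) (dm D k)" "cmp D k m = g"
    and m_unique: "\<And>h. \<lbrakk>h \<in> hom D (dm D g) (dm D k); cmp D k h = g\<rbrakk> \<Longrightarrow> h = m"
    using kernel_facts(4)[OF g(1,2,4)] by metis
  have s'A: "?s' \<in> Arr D" "dm D ?s' = dm D k" "cd D ?s' = dm D k"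
    using kernel_restrict_idem(1) unfolding sa_idem_iff by simp_all
  have "cmp D k (cmp D ?s' m) = cmp D s g"
    using m s'A kernel_facts idem_facts kernel_restrict_idem(2) assoc[of m ?s' k] assoc[of m k s]
    by simp
  then have "cmp D ?s' m = m" using m s'A g(3) by (intro m_unique) simp_all
  moreover have "cmp D (cmp D s k) m = g"
    using m kernel_facts idem_facts g(3) assoc[of m k s] by simp
  moreover have "h = m" if h: "h \<in> hom D (dm D g) (dm D k)" "cmp D ?s' h = h"
    "cmp D (cmp D s k) h = g" for h
  proof (rule m_unique[OF h(1)])
    have "cmp D k h = cmp D (cmp D k ?s') h"
      using h s'A kernel_facts assoc[of h ?s' k] by simp
    then show "cmp D k h = g"
      using h kernel_restrict_idem(2) by simp
  qed
  ultimately show "\<exists>!h. h \<in> hom D (dm D g) (dm D k) \<and> cmp D ?s' h = h \<and> cmp D (cmp D s k) h = g"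
    using m by blast
qed

text \<open>The kernel s k is a dagger mono in Kar D: (s k)^dagger (s k) = k^dagger s k = s',
  the identity of (K, s').\<close>
lemma kernel_Kar_dagger_mono:
  "dagger_mono (Kar D) ((dm D k, restrict_idem k s), (X, s), cmp D s k)"
proof -
  have "cmp D (dag D (cmp D s k)) (cmp D s k) = cmp D (cmp D (dag D k) s) (cmp D s k)"
    using kernel_facts idem_facts by (simp add: dag_comp)
  also have "\<dots> = cmp D (dag D k) (cmp D s (cmp D s k))"
    using kernel_facts idem_facts assoc[of "cmp D s k" s "dag D k"] by simp
  also have "\<dots> = cmp D (dag D k) (cmp D s k)"
    using kernel_facts idem_facts assoc[of k s s] by simp
  finally show ?thesis
    using kernel_Kar_arr idem_facts unfolding dagger_mono_def restrict_idem_def by simp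
qed

end

lemma Kar_dagger_kernel_category:
  assumes "is_dagger_kernel_category D"
  shows "is_dagger_kernel_category (Kar D)"
  unfolding is_dagger_kernel_category_def
proof (intro conjI ballI Kar_dagger_category)
  obtain z where z: "is_zero_obj D z" using assms unfolding is_dagger_kernel_category_def by blast
  then show "\<exists>z. is_zero_obj (Kar D) z" using Kar_zero_obj by blast
  fix x assume "x \<in> Arr (Kar D)"
  then obtain X s Y t f where x: "x = ((X, s), (Y, t), f)" and F: "((X, s), (Y, t), f) \<in> Arr (Kar D)"
    by (rule Kar_arr_cases)
  then obtain k where "is_kernel D f k" "dagger_mono D k"
    using assms unfolding is_dagger_kernel_category_def by auto
  then show "\<exists>k. is_kernel (Kar D) x k \<and> dagger_mono (Kar D) k"
    using kernel_Kar_kernel[OF F _ _ z] kernel_Kar_dagger_mono[OF F] x by blast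
qed

lemma Iobj_Kar:
  "X \<in> Obj D \<Longrightarrow> Iobj D X \<in> Obj (Kar D) \<and> idt (Kar D) (Iobj D X) = Iarr D (idt D X)"
  unfolding Iobj_def Iarr_def using id_sa_idem by simp

lemma Iarr_Kar_hom: "f \<in> Arr D \<Longrightarrow> Iarr D f \<in> hom (Kar D) (Iobj D (dm D f)) (Iobj D (cd D f))"
  unfolding Iobj_def Iarr_def using id_sa_idem by simp

lemma Iarr_comp:
  "\<lbrakk>f \<in> Arr D; g \<in> Arr D; cd D f = dm D g\<rbrakk> \<Longrightarrow> Iarr D (cmp D g f) = cmp (Kar D) (Iarr D g) (Iarr D f)"
  unfolding Iarr_def by simp

lemma Iarr_dag: "f \<in> Arr D \<Longrightarrow> dag (Kar D) (Iarr D f) = Iarr D (dag D f)"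
  unfolding Iarr_def by simp

text \<open>The embedding preserves kernels (not only dagger kernels): this is the kernel criterion
  for s = id, where absorbing an identity is automatic.\<close>
lemma Iarr_kernel:
  assumes z: "is_zero_obj D z" and ker: "is_kernel D f k"
  shows "is_kernel (Kar D) (Iarr D f) (Iarr D k)"
proof -
  have k: "f \<in> Arr D" "k \<in> Arr D" "cd D k = dm D f" "is_zero_mor D (cmp D f k)"
    and factor: "\<And>g. \<lbrakk>g \<in> Arr D; cd D g = dm D f; is_zero_mor D (cmp D f g)\<rbrakk> \<Longrightarrow>
       \<exists>!h. h \<in> hom D (dm D g) (dm D k) \<and> cmp D k h = g"
    using ker unfolding is_kernel_def by auto
  have "is_kernel (Kar D) ((dm D f, idt D (dm D f)), (cd D f, idt D (cd D f)), f)
                          ((dm D k, idt D (dm D k)), (dm D f, idt D (dm D f)), k)"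
  proof (rule Kar_kernelI[OF z])
    show "((dm D f, idt D (dm D f)), (cd D f, idt D (cd D f)), f) \<in> Arr (Kar D)"
      "((dm D k, idt D (dm D k)), (dm D f, idt D (dm D f)), k) \<in> Arr (Kar D)"
      using k id_sa_idem by simp_all
    show "is_zero_mor D (cmp D f k)" using k(4) .
    fix g assume "g \<in> Arr D" "cd D g = dm D f" "cmp D (idt D (dm D f)) g = g"
      "is_zero_mor D (cmp D f g)"
    then obtain h where h: "h \<in> hom D (dm D g) (dm D k)" "cmp D k h = g"
      and h_unique: "\<And>h'. \<lbrakk>h' \<in> hom D (dm D g) (dm D k); cmp D k h' = g\<rbrakk> \<Longrightarrow> h' = h"
      using factor by metis
    show "\<exists>!h. h \<in> hom D (dm D g) (dm D k) \<and> cmp D (idt D (dm D k)) h = h \<and> cmp D k h = g"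
    proof (rule ex1I[of _ h])
      show "h \<in> hom D (dm D g) (dm D k) \<and> cmp D (idt D (dm D k)) h = h \<and> cmp D k h = g"
        using h by simp
    qed (intro h_unique; simp)
  qed
  then show ?thesis unfolding Iarr_def Iobj_def using k(3) by simp
qed

end

theorem mainTheorem1:
  fixes D :: "('o, 'm) dcat"
  assumes "is_dagger_kernel_category D"
  shows "is_dagger_kernel_category (Kar D)
    \<and> (\<forall>z. is_zero_obj D z \<longrightarrow> is_zero_obj (Kar D) (z, idt D z))
    \<and> (\<forall>X s Y t f k. ((X, s), (Y, t), f) \<in> Arr (Kar D) \<and> is_kernel D f k \<and> dagger_mono D k \<longrightarrow>
         (let s' = cmp D (dag D k) (cmp D s k) in
            sa_idem D (dm D k) s'
          \<and> cmp D k s' = cmp D s k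
          \<and> (\<forall>u \<in> hom D (dm D k) (dm D k). cmp D k u = cmp D s k \<longrightarrow> u = s')
          \<and> ((dm D k, s'), (X, s), cmp D s k) \<in> Arr (Kar D)
          \<and> is_kernel (Kar D) ((X, s), (Y, t), f) ((dm D k, s'), (X, s), cmp D s k)
          \<and> dagger_mono (Kar D) ((dm D k, s'), (X, s), cmp D s k)))
    \<and> (\<forall>X \<in> Obj D. Iobj D X \<in> Obj (Kar D) \<and> idt (Kar D) (Iobj D X) = Iarr D (idt D X))
    \<and> (\<forall>f \<in> Arr D. Iarr D f \<in> hom (Kar D) (Iobj D (dm D f)) (Iobj D (cd D f)))
    \<and> (\<forall>f \<in> Arr D. \<forall>g \<in> Arr D. cd D f = dm D g \<longrightarrow>
         Iarr D (cmp D g f) = cmp (Kar D) (Iarr D g) (Iarr D f))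
    \<and> (\<forall>f \<in> Arr D. dag (Kar D) (Iarr D f) = Iarr D (dag D f))
    \<and> (\<forall>z. is_zero_obj D z \<longrightarrow> is_zero_obj (Kar D) (Iobj D z))
    \<and> (\<forall>f k. is_kernel D f k \<longrightarrow> is_kernel (Kar D) (Iarr D f) (Iarr D k))"
proof -
  interpret dagger_cat D
    using assms unfolding is_dagger_kernel_category_def by (intro dagger_cat.intro) blast
  obtain z where z: "is_zero_obj D z"
    using assms unfolding is_dagger_kernel_category_def by blast
  have kernels: "\<forall>X s Y t f k. ((X, s), (Y, t), f) \<in> Arr (Kar D) \<and> is_kernel D f k \<and> dagger_mono D k \<longrightarrow>
         (let s' = cmp D (dag D k) (cmp D s k) in
            sa_idem D (dm D k) s'
          \<and> cmp D k s' = cmp D s k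
          \<and> (\<forall>u \<in> hom D (dm D k) (dm D k). cmp D k u = cmp D s k \<longrightarrow> u = s')
          \<and> ((dm D k, s'), (X, s), cmp D s k) \<in> Arr (Kar D)
          \<and> is_kernel (Kar D) ((X, s), (Y, t), f) ((dm D k, s'), (X, s), cmp D s k)
          \<and> dagger_mono (Kar D) ((dm D k, s'), (X, s), cmp D s k))"
    (is "\<forall>X s Y t f k. _ \<longrightarrow> ?kernel_props X s Y t f k")
  proof (intro allI impI, elim conjE)
    fix X s Y t f k assume F: "((X, s), (Y, t), f) \<in> Arr (Kar D)" "is_kernel D f k" "dagger_mono D k"
    then show "?kernel_props X s Y t f k"
      using kernel_restrict_idem[OF F] kernel_Kar_arr[OF F] kernel_Kar_kernel[OF F z]
        kernel_Kar_dagger_mono[OF F] unfolding Let_def restrict_idem_def by blast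
  qed
  have "is_zero_obj (Kar D) (Iobj D z')" if "is_zero_obj D z'" for z'
    using Kar_zero_obj[OF that] unfolding Iobj_def .
  then show ?thesis
    using Kar_dagger_kernel_category[OF assms] Kar_zero_obj kernels Iobj_Kar Iarr_Kar_hom Iarr_comp
      Iarr_dag Iarr_kernel[OF z] by blast
qed

end
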